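(* Let $p\in(1,\infty)$, $r,h>0$ and $\phi\in L^\infty(\Omega_r)$. (a) There exists a unique $\psi\in L^\infty(\Omega)$ such that $-L[\psi,\phi](x)=f(x)$ for all $x\in\Omega$. (b) If $\psi_1,\psi_2:\Omega\to\mathbb{R}$ satisfy $-L[\psi_1,\phi](x)\le f(x)$ and $-L[\psi_2,\phi](x)\ge f(x)$ for all $x\in\Omega$, then $\psi_1\le\psi_2$ in $\Omega$.
   Context: $\Omega\subset\mathbb{R}^d$ is a bounded open set, $f\in C(\overline\Omega)$, $\partial\Omega_r:=\{x\in\mathbb{R}^d\setminus\Omega:\operatorname{dist}(x,\Omega)\le r\}$, $\Omega_r=\Omega\cup\partial\Omega_r$. $J_p(t)=|t|^{p-2}t$ ($J_p(0)=0$); $B_r$ open ball of radius $r$ at $0$; $\omega_d=|B_1|$; $D_{d,p}=\frac{d}{2(d+p)}\fint_{\partial B_1}|y_1|^p\,d\sigma(y)$; $\mathcal G_h=h\mathbb Z^d=\{y_\alpha=h\alpha\}$. For $\psi:\Omega\to\mathbb{R}$ and $\phi:\Omega_r\to\mathbb{R}$, \[ L[\psi,\phi](x):=\frac{h^d}{D_{d,p}\,\omega_d\,r^{p+d}}\sum_{y_\alpha\in\mathcal G_h\cap B_r}J_p\big(\phi(x+y_\alpha)-\psi(x)\big),\qquad x\in\Omega. \] *)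

theory Defs
  imports "HOL-Analysis.Analysis"
begin

definition Jp :: "real \<Rightarrow> real \<Rightarrow> real" where
  "Jp p t = (if t = 0 then 0 else \<bar>t\<bar> powr (p - 2) * t)"

definition grid :: "real \<Rightarrow> (real^'n) set" where
  "grid h = {y. \<forall>i. \<exists>k::int. y $ i = h * of_int k}"

definition outer_layer :: "(real^'n) set \<Rightarrow> real \<Rightarrow> (real^'n) set" where
  "outer_layer \<Omega> r = {x. x \<notin> \<Omega> \<and> infdist x \<Omega> \<le> r}"

definition ext_dom :: "(real^'n) set \<Rightarrow> real \<Rightarrow> (real^'n) set" where
  "ext_dom \<Omega> r = \<Omega> \<union> outer_layer \<Omega> r"

definition omega :: "('n::finite) itself \<Rightarrow> real" where
  "omega _ = measure lborel (ball (0::real^'n) 1)"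

text \<open>Average over the unit sphere w.r.t. normalized surface measure, realised
  via the cone measure: fint_{dB_1} g d sigma = (1/omega_d) int_{B_1} g(y/|y|) dy.\<close>
definition sphere_avg :: "(real^'n \<Rightarrow> real) \<Rightarrow> real" where
  "sphere_avg g = (LINT y : ball 0 1 | lborel. g (y /\<^sub>R norm y)) / omega TYPE('n)"

text \<open>D_{d,p}; y_1 is a fixed coordinate (any coordinate gives the same value by symmetry).\<close>
definition Dconst :: "('n::finite) itself \<Rightarrow> real \<Rightarrow> real" where
  "Dconst _ p = real CARD('n) / (2 * (real CARD('n) + p)) *
      sphere_avg (\<lambda>y::real^'n. \<bar>y $ (SOME i. True)\<bar> powr p)"

definition Lop :: "real \<Rightarrow> real \<Rightarrow> real \<Rightarrow> (real^'n \<Rightarrow> real) \<Rightarrow> (real^'n \<Rightarrow> real) \<Rightarrow> real^'n \<Rightarrow> real" where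
  "Lop p r h \<psi> \<phi> x =
     h ^ CARD('n) / (Dconst TYPE('n) p * omega TYPE('n) * r powr (p + real CARD('n))) *
     (\<Sum>y \<in> grid h \<inter> ball 0 r. Jp p (\<phi> (x + y) - \<psi> x))"

end

theory Submission
  imports Defs
begin

(* The value L[psi, phi](x) depends on psi only through the number psi(x), and as a function of
   that number it is continuous and strictly decreasing: J_p is strictly increasing and the grid
   point 0 always contributes. So -L[psi, phi] = f decouples into one scalar equation per point x,
   whose unique root lies in [-K, K] once K exceeds the bounds of phi by enough to dominate the
   bound of f. The root depends measurably on x because {psi > a} = {f > -L[a, phi]}, and the
   comparison principle is the same strict monotonicity read pointwise. *)

lemma Jp_of_nonneg: "0 \<le> t \<Longrightarrow> Jp p t = t powr (p - 1)"
  unfolding Jp_def using powr_mult_base[of t "p - 2"] by (auto simp: mult.commute)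

lemma Jp_minus: "Jp p (- t) = - Jp p t"
  by (simp add: Jp_def)

lemma Jp_eq_max_powr: "Jp p t = max t 0 powr (p - 1) - max (- t) 0 powr (p - 1)"
proof (cases "0 \<le> t")
  case True
  then show ?thesis by (simp add: Jp_of_nonneg)
next
  case False
  then show ?thesis using Jp_of_nonneg[of "- t" p] by (simp add: Jp_minus)
qed

lemma continuous_on_Jp:
  assumes "1 < p" shows "continuous_on UNIV (Jp p)"
proof -
  have "continuous_on UNIV (\<lambda>t::real. max (c * t) 0 powr (p - 1))" for c
    by (rule continuous_on_powr') (use assms in \<open>auto intro!: continuous_intros\<close>)
  from continuous_on_diff[OF this[of 1] this[of "-1"]] show ?thesis
    unfolding Jp_eq_max_powr[abs_def] by simp
qed

lemma strict_mono_Jp: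
  assumes "1 < p" shows "strict_mono (Jp p)"
proof -
  have nonneg: "Jp p s < Jp p t" if "0 \<le> s" "s < t" for s t
    using that assms by (simp add: Jp_of_nonneg powr_less_mono2)
  show ?thesis
  proof (rule strict_monoI)
    fix s t :: real assume "s < t"
    consider "0 \<le> s" | "s < 0" "0 \<le> t" | "t < 0" by linarith
    then show "Jp p s < Jp p t"
    proof cases
      case 2
      have "Jp p 0 = 0" by (simp add: Jp_def)
      then have "0 < Jp p (- s)" "0 \<le> Jp p t"
        using 2 nonneg[of 0 "- s"] nonneg[of 0 t] by (cases "t = 0"; simp)+
      then show ?thesis by (simp add: Jp_minus)
    next
      case 3
      then have "Jp p (- t) < Jp p (- s)" using \<open>s < t\<close> nonneg by simp
      then show ?thesis by (simp add: Jp_minus)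
    qed (use nonneg \<open>s < t\<close> in auto)
  qed
qed

lemma zero_in_grid: "0 \<in> grid h"
  unfolding grid_def by (auto intro: exI[of _ 0])

lemma finite_grid_inter_ball:
  assumes "0 < h" shows "finite (grid h \<inter> ball (0::real^'n) r)"
proof -
  define N where "N = \<lceil>r / h\<rceil>"
  define S where "S = (\<lambda>k::int. h * of_int k) ` {-N..N}"
  have "grid h \<inter> ball (0::real^'n) r \<subseteq> vec_lambda ` (UNIV \<rightarrow>\<^sub>E S)"
  proof
    fix y :: "real^'n" assume y: "y \<in> grid h \<inter> ball 0 r"
    have "y $ i \<in> S" for i
    proof -
      obtain k :: int where k: "y $ i = h * of_int k" using y unfolding grid_def by auto
      have "h * \<bar>of_int k\<bar> < r"
        using y component_le_norm_cart[of y i] k assms by (simp add: abs_mult)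
      then have "\<bar>of_int k\<bar> < r / h" using assms by (simp add: field_simps)
      then have "\<bar>k\<bar> \<le> N" unfolding N_def by linarith
      then show ?thesis unfolding S_def k by (intro image_eqI[of _ _ k]) auto
    qed
    then show "y \<in> vec_lambda ` (UNIV \<rightarrow>\<^sub>E S)"
      by (intro image_eqI[of _ _ "\<lambda>i. y $ i"]) auto
  qed
  then show ?thesis by (rule finite_subset) (simp add: S_def finite_PiE)
qed

lemma omega_pos: "0 < omega TYPE('n::finite)"
  unfolding omega_def using content_ball_pos[of 1 "0::real^'n"] by simp

lemma integral_pos_if_pos_on_ball:
  fixes G :: "'a::euclidean_space \<Rightarrow> real"
  assumes "integrable lborel G" and "\<And>y. 0 \<le> G y"
    and "0 < e" and "\<And>y. y \<in> ball a e \<Longrightarrow> 0 < G y"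
  shows "0 < integral\<^sup>L lborel G"
proof -
  have "integral\<^sup>L lborel G \<noteq> 0"
  proof
    assume "integral\<^sup>L lborel G = 0"
    then have "AE y in lborel. G y = 0"
      using integral_nonneg_eq_0_iff_AE assms(1,2) by auto
    then have "AE y in lborel. y \<notin> ball a e"
      by eventually_elim (use assms(4) in force)
    then have "measure lborel (ball a e) = 0"
      by (subst measure_eq_0_null_sets) (auto simp: AE_iff_null_sets)
    then show False using content_ball_pos[OF assms(3)] by simp
  qed
  moreover have "0 \<le> integral\<^sup>L lborel G" using assms(2) by simp
  ultimately show ?thesis by simp
qed

lemma sphere_avg_abs_component_powr_pos:
  assumes "0 < p" shows "0 < sphere_avg (\<lambda>y::real^'n. \<bar>y $ i\<bar> powr p)"
proof -
  define G where "G y = indicator (ball 0 1) y * \<bar>(y /\<^sub>R norm y) $ i\<bar> powr p" for y :: "real^'n"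
  have bounded_by_1: "\<bar>(y /\<^sub>R norm y) $ i\<bar> powr p \<le> 1" for y :: "real^'n"
  proof -
    have "\<bar>(y /\<^sub>R norm y) $ i\<bar> \<le> 1"
      using component_le_norm_cart[of "y /\<^sub>R norm y" i] by (cases "y = 0") auto
    then show ?thesis using powr_mono2[of p _ 1] assms by simp
  qed
  have "G \<in> borel_measurable lborel"
    unfolding G_def by (intro borel_measurable_times borel_measurable_indicator) (simp, measurable)
  then have "integrable lborel G"
    by (intro integrableI_bounded_set[where A="ball 0 1" and B=1])
       (use bounded_by_1 G_def in \<open>auto simp: emeasure_lborel_ball_finite[unfolded infinity_ennreal_def]\<close>)
  moreover have "0 < G y" if y: "y \<in> ball (axis i (1/2)) (1/4)" for y
  proof -
    have "\<bar>y $ i - 1/2\<bar> < 1/4"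
      using y component_le_norm_cart[of "y - axis i (1/2)" i] by (simp add: dist_norm norm_minus_commute)
    moreover have "axis i (1/2) = (1/2::real) *\<^sub>R (axis i 1 :: real^'n)"
      by (simp add: vec_eq_iff axis_def)
    then have "norm (axis i (1/2) :: real^'n) = 1/2" by simp
    then have "norm y < 1"
      using y norm_triangle_ineq[of "axis i (1/2)" "y - axis i (1/2)"]
      by (simp add: dist_norm norm_minus_commute)
    ultimately show ?thesis unfolding G_def by auto
  qed
  ultimately have "0 < integral\<^sup>L lborel G"
    by (intro integral_pos_if_pos_on_ball[where a="axis i (1/2)" and e="1/4"]) (auto simp: G_def)
  then show ?thesis
    unfolding sphere_avg_def set_lebesgue_integral_def G_def using omega_pos[where 'n='n] by (simp add: mult.commute)
qed

lemma Dconst_pos: "0 < p \<Longrightarrow> 0 < Dconst TYPE('n::finite) p"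
  unfolding Dconst_def using sphere_avg_abs_component_powr_pos[of p, where 'n='n] by simp

definition Lop_weight :: "('n::finite) itself \<Rightarrow> real \<Rightarrow> real \<Rightarrow> real \<Rightarrow> real" where
  "Lop_weight _ p r h = h ^ CARD('n) / (Dconst TYPE('n) p * omega TYPE('n) * r powr (p + real CARD('n)))"

lemma Lop_eq_weighted_sum:
  "Lop p r h \<psi> \<phi> x = Lop_weight TYPE('n) p r h * (\<Sum>y \<in> grid h \<inter> ball 0 r. Jp p (\<phi> (x + y) - \<psi> x))"
  for x :: "real^'n::finite"
  unfolding Lop_def Lop_weight_def ..

lemma Lop_weight_pos: "0 < p \<Longrightarrow> 0 < r \<Longrightarrow> 0 < h \<Longrightarrow> 0 < Lop_weight TYPE('n::finite) p r h"
  unfolding Lop_weight_def using Dconst_pos[of p, where 'n='n] omega_pos[where 'n='n] by simp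

lemma Lop_pointwise: "Lop p r h \<psi> \<phi> x = Lop p r h (\<lambda>_. \<psi> x) \<phi> x"
  by (simp add: Lop_def)

lemma Lop_uminus: "Lop p r h (\<lambda>z. - \<psi> z) (\<lambda>z. - \<phi> z) x = - Lop p r h \<psi> \<phi> x"
proof -
  have "Jp p (- \<phi> (x + y) - - \<psi> x) = - Jp p (\<phi> (x + y) - \<psi> x)" for y
    using Jp_minus[of p "\<phi> (x + y) - \<psi> x"] by simp
  then show ?thesis by (simp add: Lop_def sum_negf)
qed

lemma Lop_const_strict_decreasing:
  fixes x :: "real^'n::finite"
  assumes "1 < p" "0 < r" "0 < h" "s < t"
  shows "Lop p r h (\<lambda>_. t) \<phi> x < Lop p r h (\<lambda>_. s) \<phi> x"
proof -
  have "(\<Sum>y \<in> grid h \<inter> ball 0 r. Jp p (\<phi> (x + y) - t)) < (\<Sum>y \<in> grid h \<inter> ball 0 r. Jp p (\<phi> (x + y) - s))"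
    using assms zero_in_grid[of h] strict_mono_Jp[OF \<open>1 < p\<close>]
    by (intro sum_strict_mono finite_grid_inter_ball) (auto simp: strict_mono_less)
  then show ?thesis
    unfolding Lop_eq_weighted_sum using Lop_weight_pos[of p r h, where 'n='n] assms by simp
qed

lemma Lop_comparison:
  fixes x :: "real^'n::finite"
  assumes "1 < p" "0 < r" "0 < h"
    and "- Lop p r h \<psi>\<^sub>1 \<phi> x \<le> f x" "f x \<le> - Lop p r h \<psi>\<^sub>2 \<phi> x"
  shows "\<psi>\<^sub>1 x \<le> \<psi>\<^sub>2 x"
proof (rule ccontr)
  assume "\<not> \<psi>\<^sub>1 x \<le> \<psi>\<^sub>2 x"
  then have "Lop p r h \<psi>\<^sub>1 \<phi> x < Lop p r h \<psi>\<^sub>2 \<phi> x"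
    using Lop_const_strict_decreasing[OF assms(1-3), of "\<psi>\<^sub>2 x" "\<psi>\<^sub>1 x" \<phi> x]
    by (subst (1 2) Lop_pointwise) simp
  then show False using assms(4,5) by simp
qed

lemma continuous_on_Lop_const:
  assumes "1 < p" shows "continuous_on UNIV (\<lambda>t. Lop p r h (\<lambda>_. t) \<phi> x)"
  unfolding Lop_def
  by (intro continuous_intros continuous_on_compose2[OF continuous_on_Jp[OF assms]]) auto

lemma Lop_const_le_if_above:
  fixes x :: "real^'n::finite"
  assumes "1 < p" "0 < r" "0 < h" "0 \<le> T" and above: "\<And>y. norm y < r \<Longrightarrow> \<phi> (x + y) + T \<le> t"
  shows "Lop p r h (\<lambda>_. t) \<phi> x \<le> - (Lop_weight TYPE('n) p r h * T powr (p - 1))"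
proof -
  define S where "S = grid h \<inter> ball (0::real^'n) r"
  have "1 \<le> card S"
    using finite_grid_inter_ball[OF \<open>0 < h\<close>] zero_in_grid[of h] \<open>0 < r\<close>
    unfolding S_def by (metis One_nat_def Suc_leI card_gt_0_iff centre_in_ball empty_iff IntI)
  have "(\<Sum>y\<in>S. Jp p (\<phi> (x + y) - t)) \<le> (\<Sum>y\<in>S. - (T powr (p - 1)))"
  proof (rule sum_mono)
    fix y assume "y \<in> S"
    then have "\<phi> (x + y) - t \<le> - T" using above[of y] by (simp add: S_def)
    then have "Jp p (\<phi> (x + y) - t) \<le> Jp p (- T)"
      using strict_mono_Jp[OF \<open>1 < p\<close>] by (simp add: strict_mono_less_eq)
    then show "Jp p (\<phi> (x + y) - t) \<le> - (T powr (p - 1))"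
      using Jp_of_nonneg[OF \<open>0 \<le> T\<close>] by (simp add: Jp_minus)
  qed
  also have "\<dots> \<le> - (T powr (p - 1))"
    using \<open>1 \<le> card S\<close> by (simp add: mult_le_cancel_right1)
  finally have "Lop_weight TYPE('n) p r h * (\<Sum>y\<in>S. Jp p (\<phi> (x + y) - t))
      \<le> Lop_weight TYPE('n) p r h * - (T powr (p - 1))"
    using Lop_weight_pos[of p r h, where 'n='n] assms by (intro mult_left_mono) auto
  then show ?thesis unfolding Lop_eq_weighted_sum S_def[symmetric] by simp
qed

lemma Lop_const_ge_if_below:
  fixes x :: "real^'n::finite"
  assumes "1 < p" "0 < r" "0 < h" "0 \<le> T" and below: "\<And>y. norm y < r \<Longrightarrow> t + T \<le> \<phi> (x + y)"
  shows "Lop_weight TYPE('n) p r h * T powr (p - 1) \<le> Lop p r h (\<lambda>_. t) \<phi> x"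
  using Lop_const_le_if_above[OF assms(1-4), of "\<lambda>z. - \<phi> z" x "- t"] below Lop_uminus[of p r h "\<lambda>_. t" \<phi> x]
  by force

lemma add_in_ext_dom: "x \<in> \<Omega> \<Longrightarrow> norm y < r \<Longrightarrow> x + y \<in> ext_dom \<Omega> r"
  unfolding ext_dom_def outer_layer_def
  using infdist_le[of x \<Omega> "x + y"] by (auto simp: dist_norm)

lemma Lop_const_bracket:
  fixes \<phi> f :: "real^'n::finite \<Rightarrow> real"
  assumes "1 < p" "0 < r" "0 < h" "bounded (\<phi> ` ext_dom \<Omega> r)" "bounded (f ` \<Omega>)"
  obtains K where "0 \<le> K"
    and "\<And>x. x \<in> \<Omega> \<Longrightarrow> - Lop p r h (\<lambda>_. - K) \<phi> x \<le> f x \<and> f x \<le> - Lop p r h (\<lambda>_. K) \<phi> x"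
proof -
  obtain M where "0 < M" and M: "\<And>z. z \<in> ext_dom \<Omega> r \<Longrightarrow> \<bar>\<phi> z\<bar> \<le> M"
    using assms(4) by (auto simp: bounded_pos)
  obtain F where "0 < F" and F: "\<And>x. x \<in> \<Omega> \<Longrightarrow> \<bar>f x\<bar> \<le> F"
    using assms(5) by (auto simp: bounded_pos)
  define C where "C = Lop_weight TYPE('n) p r h"
  define T where "T = (F / C) powr (1 / (p - 1))"
  have "0 < C" unfolding C_def using Lop_weight_pos[of p r h, where 'n='n] assms by simp
  then have CT: "C * T powr (p - 1) = F"
    unfolding T_def using \<open>1 < p\<close> \<open>0 < F\<close> by (simp add: powr_powr)
  have "0 \<le> T" by (simp add: T_def)
  show ?thesis
  proof (rule that[of "M + T"])
    show "0 \<le> M + T" using \<open>0 < M\<close> \<open>0 \<le> T\<close> by simp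
    fix x assume "x \<in> \<Omega>"
    then have "- M \<le> \<phi> (x + y) \<and> \<phi> (x + y) \<le> M" if "norm y < r" for y
      using M add_in_ext_dom that abs_le_iff by (metis minus_le_iff)
    then have "Lop p r h (\<lambda>_. M + T) \<phi> x \<le> - F" "F \<le> Lop p r h (\<lambda>_. - (M + T)) \<phi> x"
      using Lop_const_le_if_above[OF assms(1-3) \<open>0 \<le> T\<close>, of \<phi> x "M + T"]
        Lop_const_ge_if_below[OF assms(1-3) \<open>0 \<le> T\<close>, of "- (M + T)" \<phi> x]
      by (simp_all add: C_def[symmetric] CT)
    then show "- Lop p r h (\<lambda>_. - (M + T)) \<phi> x \<le> f x \<and> f x \<le> - Lop p r h (\<lambda>_. M + T) \<phi> x"
      using F[OF \<open>x \<in> \<Omega>\<close>] by (auto simp: abs_le_iff)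
  qed
qed

lemma measurable_translate_lebesgue_on:
  fixes E \<Omega> :: "'a::euclidean_space set"
  assumes "E \<in> sets lebesgue" "\<Omega> \<in> sets lebesgue" "\<And>x. x \<in> \<Omega> \<Longrightarrow> x + y \<in> E"
    and "\<phi> \<in> borel_measurable (lebesgue_on E)"
  shows "(\<lambda>x. \<phi> (x + y)) \<in> borel_measurable (lebesgue_on \<Omega>)"
proof -
  have "(\<lambda>x. x + y) \<in> lebesgue_on \<Omega> \<rightarrow>\<^sub>M lebesgue_on E"
  proof (rule measurableI)
    fix A assume "A \<in> sets (lebesgue_on E)"
    then have "(\<lambda>x. - y + x) ` A \<in> sets lebesgue"
      using assms(1) by (intro lebesgue_sets_translation) (simp add: sets_restrict_space_iff)
    moreover have "(\<lambda>x. x + y) -` A \<inter> \<Omega> = \<Omega> \<inter> (\<lambda>x. - y + x) ` A"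
      by (auto simp: image_iff) (metis add.commute diff_add_cancel uminus_add_conv_diff)
    ultimately show "(\<lambda>x. x + y) -` A \<inter> space (lebesgue_on \<Omega>) \<in> sets (lebesgue_on \<Omega>)"
      using assms(2) by (auto simp: sets_restrict_space_iff)
  qed (use assms(3) in auto)
  from measurable_compose[OF this assms(4)] show ?thesis by (simp add: o_def)
qed

lemma ext_dom_in_sets_lebesgue: "0 < r \<Longrightarrow> ext_dom \<Omega> r \<in> sets lebesgue"
proof -
  assume "0 < r"
  then have "ext_dom \<Omega> r = {x. infdist x \<Omega> \<le> r}"
    by (auto simp: ext_dom_def outer_layer_def)
  then show ?thesis
    by (simp add: closed_Collect_le continuous_on_infdist continuous_on_const lebesgue_closedin[of UNIV])
qed

lemma Lop_const_measurable:
  fixes \<phi> :: "real^'n::finite \<Rightarrow> real"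
  assumes "1 < p" "0 < r" "\<Omega> \<in> sets lebesgue" "\<phi> \<in> borel_measurable (lebesgue_on (ext_dom \<Omega> r))"
  shows "(\<lambda>x. Lop p r h (\<lambda>_. t) \<phi> x) \<in> borel_measurable (lebesgue_on \<Omega>)"
proof -
  have Jp_meas: "Jp p \<in> borel_measurable borel"
    using continuous_on_Jp[OF assms(1)] by (rule borel_measurable_continuous_onI)
  have "(\<lambda>x. \<phi> (x + y)) \<in> borel_measurable (lebesgue_on \<Omega>)" if "y \<in> ball 0 r" for y
    using that add_in_ext_dom[of _ \<Omega> y r]
    by (intro measurable_translate_lebesgue_on[OF ext_dom_in_sets_lebesgue[OF \<open>0 < r\<close>] assms(3) _ assms(4)])
       auto
  then have shifted: "(\<lambda>x. \<phi> (x + y) - t) \<in> borel_measurable (lebesgue_on \<Omega>)" if "y \<in> ball 0 r" for y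
    using that by (intro borel_measurable_diff) auto
  have "(\<lambda>x. Jp p (\<phi> (x + y) - t)) \<in> borel_measurable (lebesgue_on \<Omega>)" if "y \<in> ball 0 r" for y
    using measurable_compose[OF shifted[OF that] Jp_meas] by (simp add: o_def)
  then show ?thesis
    unfolding Lop_def by (intro borel_measurable_times borel_measurable_const borel_measurable_sum) auto
qed

lemma measurable_root_of_strict_mono_family:
  fixes g :: "'a \<Rightarrow> real \<Rightarrow> real"
  assumes mono: "\<And>x. x \<in> space M \<Longrightarrow> strict_mono (g x)"
    and cont: "\<And>x. x \<in> space M \<Longrightarrow> continuous_on {- K..K} (g x)"
    and g_meas: "\<And>t. (\<lambda>x. g x t) \<in> borel_measurable M" and f_meas: "f \<in> borel_measurable M"
    and "0 \<le> K" and bracket: "\<And>x. x \<in> space M \<Longrightarrow> g x (- K) \<le> f x \<and> f x \<le> g x K"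
  obtains \<psi> where "\<psi> \<in> borel_measurable M"
    and "\<And>x. x \<in> space M \<Longrightarrow> g x (\<psi> x) = f x \<and> \<bar>\<psi> x\<bar> \<le> K"
proof -
  define \<psi> where "\<psi> x = (THE t. g x t = f x)" for x
  have root: "g x (\<psi> x) = f x \<and> \<bar>\<psi> x\<bar> \<le> K" if x: "x \<in> space M" for x
  proof -
    obtain t where t: "- K \<le> t" "t \<le> K" "g x t = f x"
      using IVT'[of "g x" "- K" "f x" K] bracket[OF x] cont[OF x] \<open>0 \<le> K\<close> by auto
    have "s = t" if "g x s = f x" for s
      using strict_mono_eq[OF mono[OF x], of s t] that t(3) by simp
    then have "\<psi> x = t"
      unfolding \<psi>_def using t(3) by (intro the_equality)
    then show ?thesis using t by auto
  qed
  have "a < \<psi> x \<longleftrightarrow> 0 < f x - g x a" if "x \<in> space M" for x a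
    using root[OF that] strict_mono_less[OF mono[OF that], of a "\<psi> x"] by auto
  then have level_sets: "{x \<in> space M. a < \<psi> x} = {x \<in> space M. 0 < f x - g x a}" for a
    by auto
  have "{x \<in> space M. 0 < f x - g x a} \<in> sets M" for a
    using borel_measurable_diff[OF f_meas g_meas, of a] unfolding borel_measurable_iff_greater by blast
  then have "\<psi> \<in> borel_measurable M"
    unfolding borel_measurable_iff_greater level_sets by blast
  with root show ?thesis using that by blast
qed

lemma Lop_equation_solvable:
  fixes \<phi> f :: "real^'n::finite \<Rightarrow> real"
  assumes "1 < p" "0 < r" "0 < h" "\<Omega> \<in> sets lebesgue"
    and "\<phi> \<in> borel_measurable (lebesgue_on (ext_dom \<Omega> r))" "bounded (\<phi> ` ext_dom \<Omega> r)"
    and "f \<in> borel_measurable (lebesgue_on \<Omega>)" "bounded (f ` \<Omega>)"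
  obtains \<psi> where "\<psi> \<in> borel_measurable (lebesgue_on \<Omega>)" "bounded (\<psi> ` \<Omega>)"
    and "\<And>x. x \<in> \<Omega> \<Longrightarrow> - Lop p r h \<psi> \<phi> x = f x"
proof -
  define g where "g x t = - Lop p r h (\<lambda>_. t) \<phi> x" for x t
  obtain K where "0 \<le> K" and "\<And>x. x \<in> \<Omega> \<Longrightarrow> g x (- K) \<le> f x \<and> f x \<le> g x K"
    using Lop_const_bracket[OF assms(1-3,6,8)] unfolding g_def by blast
  moreover have "strict_mono (g x)" for x
    unfolding g_def by (rule strict_monoI) (simp add: Lop_const_strict_decreasing[OF assms(1-3)])
  moreover have "continuous_on {- K..K} (g x)" for x
    unfolding g_def
    by (intro continuous_on_minus continuous_on_subset[OF continuous_on_Lop_const[OF assms(1)]]) simp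
  moreover have "(\<lambda>x. g x t) \<in> borel_measurable (lebesgue_on \<Omega>)" for t
    unfolding g_def using Lop_const_measurable[OF assms(1,2,4,5)] by simp
  ultimately obtain \<psi> where "\<psi> \<in> borel_measurable (lebesgue_on \<Omega>)"
    and \<psi>: "\<And>x. x \<in> \<Omega> \<Longrightarrow> g x (\<psi> x) = f x \<and> \<bar>\<psi> x\<bar> \<le> K"
    using measurable_root_of_strict_mono_family[of "lebesgue_on \<Omega>" g K f] assms(7) by (simp, blast)
  moreover have "bounded (\<psi> ` \<Omega>)"
    using \<psi> by (auto simp: bounded_real)
  moreover have "- Lop p r h \<psi> \<phi> x = f x" if "x \<in> \<Omega>" for x
    using \<psi>[OF that] Lop_pointwise[of p r h \<psi>] unfolding g_def by simp
  ultimately show ?thesis using that by blast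
qed

theorem lemma4p3:
  fixes \<Omega> :: "(real^'n) set" and f \<phi> :: "real^'n \<Rightarrow> real" and p r h :: real
  assumes "open \<Omega>" and "bounded \<Omega>"
    and "continuous_on (closure \<Omega>) f"
    and "1 < p" and "0 < r" and "0 < h"
    and "\<phi> \<in> borel_measurable (lebesgue_on (ext_dom \<Omega> r))"
    and "bounded (\<phi> ` ext_dom \<Omega> r)"
  shows "(\<exists>\<psi>. \<psi> \<in> borel_measurable (lebesgue_on \<Omega>) \<and> bounded (\<psi> ` \<Omega>) \<and>
             (\<forall>x\<in>\<Omega>. - Lop p r h \<psi> \<phi> x = f x) \<and>
             (\<forall>\<psi>'. \<psi>' \<in> borel_measurable (lebesgue_on \<Omega>) \<and> bounded (\<psi>' ` \<Omega>) \<and>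
                    (\<forall>x\<in>\<Omega>. - Lop p r h \<psi>' \<phi> x = f x) \<longrightarrow> (\<forall>x\<in>\<Omega>. \<psi>' x = \<psi> x)))
       \<and> (\<forall>\<psi>1 \<psi>2. (\<forall>x\<in>\<Omega>. - Lop p r h \<psi>1 \<phi> x \<le> f x) \<and> (\<forall>x\<in>\<Omega>. - Lop p r h \<psi>2 \<phi> x \<ge> f x)
              \<longrightarrow> (\<forall>x\<in>\<Omega>. \<psi>1 x \<le> \<psi>2 x))"
proof -
  have "\<Omega> \<in> sets lebesgue" using assms(1) by simp
  moreover have "f \<in> borel_measurable (lebesgue_on \<Omega>)"
    using assms(1) continuous_on_subset[OF assms(3) closure_subset]
    by (intro continuous_imp_measurable_on_sets_lebesgue) auto
  moreover have "bounded (f ` \<Omega>)"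
    using compact_continuous_image[OF assms(3)] assms(2) closure_subset
    by (meson bounded_subset compact_closure compact_imp_bounded image_mono)
  ultimately obtain \<psi> where "\<psi> \<in> borel_measurable (lebesgue_on \<Omega>)" "bounded (\<psi> ` \<Omega>)"
    and solves: "\<And>x. x \<in> \<Omega> \<Longrightarrow> - Lop p r h \<psi> \<phi> x = f x"
    by (rule Lop_equation_solvable[OF assms(4-6) _ assms(7,8)]) blast
  moreover have "\<psi>' x = \<psi> x" if "\<forall>x\<in>\<Omega>. - Lop p r h \<psi>' \<phi> x = f x" "x \<in> \<Omega>" for \<psi>' x
    using Lop_comparison[OF assms(4-6), of \<psi>' \<phi> x f \<psi>] Lop_comparison[OF assms(4-6), of \<psi> \<phi> x f \<psi>']
      solves that by fastforce
  ultimately show ?thesis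
    using Lop_comparison[OF assms(4-6)] by blast
qed

end
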